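(* Let $0<\alpha<1$ and let $g_\alpha$ be the $L^\infty$ Lorentz metric on $\mathbb{R}^4$ with global coordinates $(t,x,y,z)$ given by $g_\alpha = -dt^2 + \rho$, where $$\rho = \Big(\tfrac{1+\alpha^2}{2}+\tfrac{1-\alpha^2}{2}f_1\Big)dx^2 + \Big(\tfrac{1+\alpha^2}{2}-\tfrac{1-\alpha^2}{2}f_1\Big)dy^2 + (1-\alpha^2)f_2\,dx\,dy + dz^2,$$ with $f_1(x,y)=\frac{x^2-y^2}{x^2+y^2}$, $f_2(x,y)=\frac{2xy}{x^2+y^2}$ for $(x,y)\neq(0,0)$. Then: (i) for every $(x,y,z)$ with $(x,y)\ne(0,0)$ and every $v=(v_1,v_2,v_3)\in\mathbb{R}^3$ one has $\rho(x,y,z)(v,v)\ge \alpha^2(v_1^2+v_2^2)+v_3^2$; in particular $\rho$ is an $L^\infty$ Riemannian metric on $\mathbb{R}^3$; (ii) for every $t_0\in\mathbb{R}$, every inextendible $C^1$ curve $\gamma=(\gamma_0,\gamma_1)\colon I\to\mathbb{R}\times\mathbb{R}^3$ ($I$ an open interval) with $\dot\gamma(s)\neq 0$ for all $s$ and $g_\alpha(\gamma(s))(\dot\gamma(s),\dot\gamma(s))<0$ for almost every $s$ meets the hypersurface $\{t_0\}\times\mathbb{R}^3$ exactly once.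
   Context: Here $f_1,f_2$ are Borel measurable bounded functions (their values on the null set $\{x=y=0\}$ are irrelevant), so $s\mapsto g_\alpha(\gamma(s))(\dot\gamma(s),\dot\gamma(s))$ is Borel measurable for $C^1$ curves. A curve is inextendible if it has no endpoint (no limit) at either end of its parameter interval. *)

theory Defs
  imports "HOL-Analysis.Analysis"
begin

text \<open>Coefficient functions. Their values at the origin are irrelevant in the paper;
  we leave them as arbitrary parameters c1, c2.\<close>
definition f1 :: "real \<Rightarrow> real \<Rightarrow> real \<Rightarrow> real" where
  "f1 c1 x y = (if x = 0 \<and> y = 0 then c1 else (x\<^sup>2 - y\<^sup>2) / (x\<^sup>2 + y\<^sup>2))"

definition f2 :: "real \<Rightarrow> real \<Rightarrow> real \<Rightarrow> real" where
  "f2 c2 x y = (if x = 0 \<and> y = 0 then c2 else (2 * x * y) / (x\<^sup>2 + y\<^sup>2))"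

text \<open>The Riemannian part rho at the point (x,y,z), evaluated on (v,v) with v=(v1,v2,v3).
  The term (1-alpha^2) f2 dx dy is the symmetric product, contributing (1-alpha^2) f2 v1 v2.\<close>
definition rho :: "real \<Rightarrow> real \<Rightarrow> real \<Rightarrow> real \<times> real \<times> real \<Rightarrow> real \<times> real \<times> real \<Rightarrow> real" where
  "rho \<alpha> c1 c2 p v = (case p of (x, y, z) \<Rightarrow> case v of (v1, v2, v3) \<Rightarrow>
      ((1 + \<alpha>\<^sup>2) / 2 + (1 - \<alpha>\<^sup>2) / 2 * f1 c1 x y) * v1\<^sup>2
    + ((1 + \<alpha>\<^sup>2) / 2 - (1 - \<alpha>\<^sup>2) / 2 * f1 c1 x y) * v2\<^sup>2
    + (1 - \<alpha>\<^sup>2) * f2 c2 x y * v1 * v2 + v3\<^sup>2)"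

definition g_alpha :: "real \<Rightarrow> real \<Rightarrow> real \<Rightarrow> real \<times> (real \<times> real \<times> real)
    \<Rightarrow> real \<times> (real \<times> real \<times> real) \<Rightarrow> real" where
  "g_alpha \<alpha> c1 c2 p w = - (fst w)\<^sup>2 + rho \<alpha> c1 c2 (snd p) (snd w)"

definition upper_end :: "real set \<Rightarrow> real filter" where
  "upper_end I = (if bdd_above I then at_left (Sup I) else at_top)"

definition lower_end :: "real set \<Rightarrow> real filter" where
  "lower_end I = (if bdd_below I then at_right (Inf I) else at_bot)"

definition inextendible :: "real set \<Rightarrow> (real \<Rightarrow> 'a::topological_space) \<Rightarrow> bool" where
  "inextendible I \<gamma> \<longleftrightarrow> \<not> (\<exists>L. (\<gamma> \<longlongrightarrow> L) (upper_end I)) \<and> \<not> (\<exists>L. (\<gamma> \<longlongrightarrow> L) (lower_end I))"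

end

theory Submission
  imports Defs
begin

(*
  Off the z-axis, rho = alpha^2 (dx^2 + dy^2) + dz^2 + (1 - alpha^2) (x dx + y dy)^2 / (x^2 + y^2),
  which gives (i).  Along a timelike curve (t, x, y, z) the causality inequality holds only almost
  everywhere, and on the axis rho has arbitrary coefficients; continuity of the velocity upgrades
  it to the cone condition alpha |x'|, alpha |y'|, alpha |z'| <= |t'| at every time: where
  (x', y') <> 0 the curve is off the axis nearby, and where (x', y') = 0 any lower bound
  dz^2 - K (dx^2 + dy^2) of rho suffices.  Hence t' never vanishes, so t is strictly monotone,
  which gives uniqueness.  If t missed t0 it would be bounded at one end of the parameter
  interval; there t/alpha + w and t/alpha - w are monotone and bounded for every spatial
  component w, so the whole curve would converge at that end, contradicting inextendibility.
*)

section \<open>The spatial metric\<close>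

lemma rho_off_axis_eq:
  assumes "(x, y) \<noteq> (0, 0)"
  shows "rho \<alpha> c1 c2 (x, y, z) (v1, v2, v3) =
    \<alpha>\<^sup>2 * (v1\<^sup>2 + v2\<^sup>2) + v3\<^sup>2 + (1 - \<alpha>\<^sup>2) * (x * v1 + y * v2)\<^sup>2 / (x\<^sup>2 + y\<^sup>2)"
proof -
  have r: "x\<^sup>2 + y\<^sup>2 > 0"
    using assms by (simp add: sum_power2_gt_zero_iff)
  have f: "f1 c1 x y = (x\<^sup>2 - y\<^sup>2) / (x\<^sup>2 + y\<^sup>2)" "f2 c2 x y = 2 * x * y / (x\<^sup>2 + y\<^sup>2)"
    using assms unfolding f1_def f2_def by auto
  show ?thesis
    unfolding rho_def prod.case f using r
    by (simp add: divide_simps) (auto simp: algebra_simps power2_eq_square)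
qed

lemma rho_ge_off_axis:
  assumes "(x, y) \<noteq> (0, 0)" "\<alpha>\<^sup>2 \<le> 1"
  shows "\<alpha>\<^sup>2 * (v1\<^sup>2 + v2\<^sup>2) + v3\<^sup>2 \<le> rho \<alpha> c1 c2 (x, y, z) (v1, v2, v3)"
  using assms by (simp add: rho_off_axis_eq)

lemma abs_mult_le_sum_squares: "\<bar>x * y\<bar> \<le> x\<^sup>2 + (y\<^sup>2::real)"
proof -
  have "2 * (\<bar>x\<bar> * \<bar>y\<bar>) \<le> \<bar>x\<bar>\<^sup>2 + \<bar>y\<bar>\<^sup>2"
    using sum_squares_bound[of "\<bar>x\<bar>" "\<bar>y\<bar>"] by (simp only: mult.assoc)
  moreover have "0 \<le> \<bar>x\<bar> * \<bar>y\<bar>" by simp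
  ultimately show ?thesis unfolding abs_mult power2_abs by linarith
qed

lemma quadratic_form_lower_bound:
  fixes a b c v1 v2 :: real
  shows "- (\<bar>a\<bar> + \<bar>b\<bar> + \<bar>c\<bar>) * (v1\<^sup>2 + v2\<^sup>2) \<le> a * v1\<^sup>2 + b * v2\<^sup>2 + c * v1 * v2"
proof -
  have "- (\<bar>a\<bar> * (v1\<^sup>2 + v2\<^sup>2)) \<le> a * v1\<^sup>2"
    using abs_ge_minus_self[of "a * v1\<^sup>2"] mult_left_mono[of "v1\<^sup>2" "v1\<^sup>2 + v2\<^sup>2" "\<bar>a\<bar>"]
    by (simp add: abs_mult)
  moreover have "- (\<bar>b\<bar> * (v1\<^sup>2 + v2\<^sup>2)) \<le> b * v2\<^sup>2"
    using abs_ge_minus_self[of "b * v2\<^sup>2"] mult_left_mono[of "v2\<^sup>2" "v1\<^sup>2 + v2\<^sup>2" "\<bar>b\<bar>"]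
    by (simp add: abs_mult)
  moreover have "- (\<bar>c\<bar> * (v1\<^sup>2 + v2\<^sup>2)) \<le> c * v1 * v2"
    using abs_ge_minus_self[of "c * (v1 * v2)"] mult_left_mono[OF abs_mult_le_sum_squares[of v1 v2], of "\<bar>c\<bar>"]
    by (simp add: abs_mult mult.assoc)
  ultimately show ?thesis by (simp add: algebra_simps)
qed

text \<open>On the axis the coefficients of rho are arbitrary constants, so only a crude bound holds there.\<close>
lemma rho_lower_bound:
  assumes "\<alpha>\<^sup>2 \<le> 1"
  obtains K :: real where "\<And>p v1 v2 v3. v3\<^sup>2 - K * (v1\<^sup>2 + v2\<^sup>2) \<le> rho \<alpha> c1 c2 p (v1, v2, v3)"
proof
  define a where "a = (1 + \<alpha>\<^sup>2) / 2 + (1 - \<alpha>\<^sup>2) / 2 * c1"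
  define b where "b = (1 + \<alpha>\<^sup>2) / 2 - (1 - \<alpha>\<^sup>2) / 2 * c1"
  define c where "c = (1 - \<alpha>\<^sup>2) * c2"
  fix p :: "real \<times> real \<times> real" and v1 v2 v3 :: real
  obtain x y z where p: "p = (x, y, z)" by (cases p) auto
  show "v3\<^sup>2 - (\<bar>a\<bar> + \<bar>b\<bar> + \<bar>c\<bar>) * (v1\<^sup>2 + v2\<^sup>2) \<le> rho \<alpha> c1 c2 p (v1, v2, v3)"
  proof (cases "(x, y) = (0, 0)")
    case True
    then have "rho \<alpha> c1 c2 p (v1, v2, v3) = a * v1\<^sup>2 + b * v2\<^sup>2 + c * v1 * v2 + v3\<^sup>2"
      unfolding p rho_def f1_def f2_def a_def b_def c_def by simp
    then show ?thesis
      using quadratic_form_lower_bound[of a b c v1 v2] by linarith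
  next
    case False
    have "0 \<le> (\<bar>a\<bar> + \<bar>b\<bar> + \<bar>c\<bar>) * (v1\<^sup>2 + v2\<^sup>2)" "0 \<le> \<alpha>\<^sup>2 * (v1\<^sup>2 + v2\<^sup>2)"
      by simp_all
    then show ?thesis
      using rho_ge_off_axis[OF False assms, of v1 v2 v3 c1 c2 z] unfolding p by linarith
  qed
qed

section \<open>Real functions on an open interval\<close>

lemma is_interval_avoiding_point:
  fixes S :: "real set"
  assumes "is_interval S" "t \<notin> S"
  shows "(\<forall>x\<in>S. x < t) \<or> (\<forall>x\<in>S. t < x)"
proof (rule ccontr)
  assume "\<not> ?thesis"
  then obtain a b where "a \<in> S" "b \<in> S" "b \<le> t" "t \<le> a"
    by (auto simp: not_less)
  then have "t \<in> S"
    using assms(1) unfolding is_interval_1 by blast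
  with assms(2) show False by simp
qed

lemma continuous_nonvanishing_sign:
  fixes f :: "real \<Rightarrow> real"
  assumes "is_interval I" "continuous_on I f" "\<And>s. s \<in> I \<Longrightarrow> f s \<noteq> 0"
  obtains \<sigma> :: real where "\<bar>\<sigma>\<bar> = 1" "\<And>s. s \<in> I \<Longrightarrow> 0 < \<sigma> * f s"
proof -
  have "is_interval (f ` I)"
    using connected_continuous_image assms(1,2) is_interval_connected_1 by blast
  then have "(\<forall>x\<in>f ` I. x < 0) \<or> (\<forall>x\<in>f ` I. 0 < x)"
    using assms(3) by (intro is_interval_avoiding_point) auto
  then show ?thesis
  proof
    assume "\<forall>x\<in>f ` I. x < 0"
    then show ?thesis
      by (intro that[of "-1"]) auto
  next
    assume "\<forall>x\<in>f ` I. 0 < x"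
    then show ?thesis
      by (intro that[of 1]) auto
  qed
qed

lemma mono_on_if_DERIV_nonneg:
  fixes f :: "real \<Rightarrow> real"
  assumes "is_interval I"
    and "\<And>s. s \<in> I \<Longrightarrow> (f has_real_derivative f' s) (at s)" "\<And>s. s \<in> I \<Longrightarrow> 0 \<le> f' s"
  shows "mono_on I f"
proof (rule mono_onI)
  fix a b assume "a \<in> I" "b \<in> I" "a \<le> b"
  then have "{a..b} \<subseteq> I"
    using mem_is_interval_1_I[OF assms(1) \<open>a \<in> I\<close> \<open>b \<in> I\<close>] by auto
  show "f a \<le> f b"
  proof (rule DERIV_nonneg_imp_nondecreasing[OF \<open>a \<le> b\<close>])
    fix x assume "a \<le> x" "x \<le> b"
    with \<open>{a..b} \<subseteq> I\<close> have "x \<in> I" by auto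
    then show "\<exists>y. DERIV f x :> y \<and> 0 \<le> y"
      using assms(2,3) by blast
  qed
qed

lemma strict_mono_on_if_DERIV_pos:
  fixes f :: "real \<Rightarrow> real"
  assumes "is_interval I"
    and "\<And>s. s \<in> I \<Longrightarrow> (f has_real_derivative f' s) (at s)" "\<And>s. s \<in> I \<Longrightarrow> 0 < f' s"
  shows "strict_mono_on I f"
proof (rule strict_mono_onI)
  fix a b assume "a \<in> I" "b \<in> I" "a < b"
  then have "{a..b} \<subseteq> I"
    using mem_is_interval_1_I[OF assms(1) \<open>a \<in> I\<close> \<open>b \<in> I\<close>] by auto
  show "f a < f b"
  proof (rule DERIV_pos_imp_increasing[OF \<open>a < b\<close>])
    fix x assume "a \<le> x" "x \<le> b"
    with \<open>{a..b} \<subseteq> I\<close> have "x \<in> I" by auto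
    then show "\<exists>y. DERIV f x :> y \<and> 0 < y"
      using assms(2,3) by blast
  qed
qed

lemma eventually_upper_end:
  fixes I :: "real set"
  assumes "open I" "is_interval I" "s1 \<in> I"
  shows "eventually (\<lambda>s. s \<in> I \<and> s1 \<le> s) (upper_end I)"
proof (cases "bdd_above I")
  case True
  obtain e where e: "e > 0" "ball s1 e \<subseteq> I"
    using assms(1,3) open_contains_ball by blast
  have "s1 + e / 2 \<in> I"
    using e by (auto simp: dist_real_def intro!: subsetD[OF e(2)])
  then have "s1 < Sup I"
    using cSup_upper[OF _ True] e(1) by fastforce
  moreover have "y \<in> I \<and> s1 \<le> y" if y: "s1 < y" "y < Sup I" for y
  proof -
    obtain w where "w \<in> I" "y < w"
      using less_cSup_iff[of I y] True assms(3) y(2) by auto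
    then show ?thesis
      using assms(2,3) y(1) unfolding is_interval_1 by (meson less_imp_le)
  qed
  ultimately show ?thesis
    using True by (simp add: upper_end_def eventually_at_left_field) (use less_imp_le in blast)
next
  case False
  have "y \<in> I \<and> s1 \<le> y" if y: "s1 \<le> y" for y
  proof -
    obtain w where "w \<in> I" "y < w"
      using False unfolding bdd_above_def by (meson not_le)
    then show ?thesis
      using assms(2,3) y unfolding is_interval_1 by (meson less_imp_le)
  qed
  then show ?thesis
    using False by (auto simp: upper_end_def eventually_at_top_linorder intro!: exI[of _ s1])
qed

lemma eventually_lower_end:
  fixes I :: "real set"
  assumes "open I" "is_interval I" "s1 \<in> I"
  shows "eventually (\<lambda>s. s \<in> I \<and> s \<le> s1) (lower_end I)"
proof (cases "bdd_below I")
  case True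
  obtain e where e: "e > 0" "ball s1 e \<subseteq> I"
    using assms(1,3) open_contains_ball by blast
  have "s1 - e / 2 \<in> I"
    using e by (auto simp: dist_real_def intro!: subsetD[OF e(2)])
  then have "Inf I < s1"
    using cInf_lower[OF _ True] e(1) by fastforce
  moreover have "y \<in> I \<and> y \<le> s1" if y: "Inf I < y" "y < s1" for y
  proof -
    obtain w where "w \<in> I" "w < y"
      using cInf_less_iff[of I y] True assms(3) y(1) by auto
    then show ?thesis
      using assms(2,3) y(2) unfolding is_interval_1 by (meson less_imp_le)
  qed
  ultimately show ?thesis
    using True by (simp add: lower_end_def eventually_at_right_field) (use less_imp_le in blast)
next
  case False
  have "y \<in> I \<and> y \<le> s1" if y: "y \<le> s1" for y
  proof -
    obtain w where "w \<in> I" "w < y"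
      using False unfolding bdd_below_def by (meson not_le)
    then show ?thesis
      using assms(2,3) y unfolding is_interval_1 by (meson less_imp_le)
  qed
  then show ?thesis
    using False by (auto simp: lower_end_def eventually_at_bot_linorder intro!: exI[of _ s1])
qed

lemma mono_on_tendsto_upper_end:
  fixes f :: "real \<Rightarrow> real"
  assumes "open I" "is_interval I" "s1 \<in> I" "mono_on I f"
    and bound: "\<And>s. s \<in> I \<Longrightarrow> s1 \<le> s \<Longrightarrow> f s \<le> K"
  shows "\<exists>L. (f \<longlongrightarrow> L) (upper_end I)"
proof -
  let ?J = "{s \<in> I. s1 \<le> s}"
  have ne: "f ` ?J \<noteq> {}" using assms(3) by auto
  have bdd: "bdd_above (f ` ?J)" using bound by (auto intro!: bdd_aboveI[of _ K])
  show ?thesis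
  proof (intro exI increasing_tendsto)
    show "eventually (\<lambda>s. f s \<le> Sup (f ` ?J)) (upper_end I)"
      using eventually_upper_end[OF assms(1-3)] by eventually_elim (auto intro!: cSup_upper bdd)
    fix x assume "x < Sup (f ` ?J)"
    then obtain s2 where s2: "s2 \<in> ?J" "x < f s2"
      using less_cSup_iff[OF ne bdd] by auto
    then have "s2 \<in> I" by simp
    show "eventually (\<lambda>s. x < f s) (upper_end I)"
      using eventually_upper_end[OF assms(1,2) \<open>s2 \<in> I\<close>] s2
      by (auto elim!: eventually_mono intro: less_le_trans mono_onD[OF assms(4)])
  qed
qed

lemma mono_on_tendsto_lower_end:
  fixes f :: "real \<Rightarrow> real"
  assumes "open I" "is_interval I" "s1 \<in> I" "mono_on I f"
    and bound: "\<And>s. s \<in> I \<Longrightarrow> s \<le> s1 \<Longrightarrow> K \<le> f s"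
  shows "\<exists>L. (f \<longlongrightarrow> L) (lower_end I)"
proof -
  let ?J = "{s \<in> I. s \<le> s1}"
  have ne: "f ` ?J \<noteq> {}" using assms(3) by auto
  have bdd: "bdd_below (f ` ?J)" using bound by (auto intro!: bdd_belowI[of _ K])
  show ?thesis
  proof (intro exI decreasing_tendsto)
    show "eventually (\<lambda>s. Inf (f ` ?J) \<le> f s) (lower_end I)"
      using eventually_lower_end[OF assms(1-3)] by eventually_elim (auto intro!: cInf_lower bdd)
    fix x assume "Inf (f ` ?J) < x"
    then obtain s2 where s2: "s2 \<in> ?J" "f s2 < x"
      using cInf_less_iff[OF ne bdd] by auto
    then have "s2 \<in> I" by simp
    show "eventually (\<lambda>s. f s < x) (lower_end I)"
      using eventually_lower_end[OF assms(1,2) \<open>s2 \<in> I\<close>] s2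
      by (auto elim!: eventually_mono intro: le_less_trans mono_onD[OF assms(4)])
  qed
qed

lemma DERIV_nonzero_imp_eventually_nonzero:
  fixes f :: "real \<Rightarrow> real"
  assumes "(f has_real_derivative d) (at x)" "d \<noteq> 0"
  shows "eventually (\<lambda>y. f y \<noteq> 0) (at x)"
proof (cases "f x = 0")
  case True
  have "((\<lambda>y. (f y - f x) / (y - x)) \<longlongrightarrow> d) (at x)"
    using assms(1) by (simp add: has_field_derivative_iff)
  then have "eventually (\<lambda>y. (f y - f x) / (y - x) \<noteq> 0) (at x)"
    using assms(2) by (rule tendsto_imp_eventually_ne)
  then show ?thesis
    by (rule eventually_mono) (use True in auto)
next
  case False
  show ?thesis
    using tendsto_imp_eventually_ne[OF isContD[OF DERIV_isCont[OF assms(1)]] False] .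
qed

lemma AE_neg_imp_continuous_minorant_nonpos:
  fixes G H :: "real \<Rightarrow> real"
  assumes ae: "AE u in lborel. u \<in> I \<longrightarrow> G u < 0"
    and I: "open I" "s \<in> I"
    and "isCont H s" and minorant: "eventually (\<lambda>u. H u \<le> G u) (at s)"
  shows "H s \<le> 0"
proof (rule ccontr)
  assume "\<not> H s \<le> 0"
  then have "0 < H s" by linarith
  from order_tendstoD(1)[OF isContD[OF \<open>isCont H s\<close>] this]
  have "eventually (\<lambda>u. 0 < H u) (at s)" .
  with minorant eventually_at_in_open'[OF I]
  have "eventually (\<lambda>u. \<not> (u \<in> I \<longrightarrow> G u < 0)) (at s)"
    by eventually_elim auto
  then have "eventually (\<lambda>u. \<not> (u \<in> I \<longrightarrow> G u < 0)) (at_right s)"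
    unfolding eventually_at_split by (rule conjunct2)
  then obtain b where "s < b" and b: "\<And>u. s < u \<Longrightarrow> u < b \<Longrightarrow> \<not> (u \<in> I \<longrightarrow> G u < 0)"
    unfolding eventually_at_right_field by blast
  from ae obtain N where N: "{u \<in> space lborel. \<not> (u \<in> I \<longrightarrow> G u < 0)} \<subseteq> N"
    "emeasure lborel N = 0" "N \<in> sets lborel"
    by (rule AE_E)
  have "{s<..<b} \<subseteq> N"
  proof
    fix u assume "u \<in> {s<..<b}"
    then have "u \<in> {u \<in> space lborel. \<not> (u \<in> I \<longrightarrow> G u < 0)}"
      using b by simp
    then show "u \<in> N"
      using N(1) by blast
  qed
  then have "emeasure lborel {s<..<b} \<le> emeasure lborel N"
    using N(3) by (rule emeasure_mono)
  also have "\<dots> = 0"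
    by (rule N(2))
  finally show False
    using \<open>s < b\<close> by simp
qed

section \<open>Curves dominated by their time component\<close>

lemma dominated_mono_on:
  fixes T W T' W' :: "real \<Rightarrow> real"
  assumes "is_interval I" "\<alpha> > 0"
    and dT: "\<And>s. s \<in> I \<Longrightarrow> (T has_real_derivative T' s) (at s)"
    and dW: "\<And>s. s \<in> I \<Longrightarrow> (W has_real_derivative W' s) (at s)"
    and dom: "\<And>s. s \<in> I \<Longrightarrow> \<alpha> * \<bar>W' s\<bar> \<le> T' s"
  shows "mono_on I (\<lambda>s. T s / \<alpha> + W s)" "mono_on I (\<lambda>s. T s / \<alpha> - W s)"
proof -
  have bound: "\<bar>W' s\<bar> \<le> T' s / \<alpha>" if "s \<in> I" for s
    using dom[OF that] \<open>\<alpha> > 0\<close> by (simp add: field_simps)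
  have "0 \<le> T' s / \<alpha> + W' s" "0 \<le> T' s / \<alpha> - W' s" if "s \<in> I" for s
    using bound[OF that] by linarith+
  with \<open>\<alpha> > 0\<close> show "mono_on I (\<lambda>s. T s / \<alpha> + W s)" "mono_on I (\<lambda>s. T s / \<alpha> - W s)"
    by (auto intro!: mono_on_if_DERIV_nonneg[OF \<open>is_interval I\<close>] derivative_eq_intros dT dW)
qed

lemma dominated_tendsto_upper_end:
  fixes T W T' W' :: "real \<Rightarrow> real"
  assumes I: "open I" "is_interval I" "I \<noteq> {}" and "\<alpha> > 0"
    and dT: "\<And>s. s \<in> I \<Longrightarrow> (T has_real_derivative T' s) (at s)"
    and dW: "\<And>s. s \<in> I \<Longrightarrow> (W has_real_derivative W' s) (at s)"
    and dom: "\<And>s. s \<in> I \<Longrightarrow> \<alpha> * \<bar>W' s\<bar> \<le> T' s"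
    and "bdd_above (T ` I)"
  shows "\<exists>L. (W \<longlongrightarrow> L) (upper_end I)"
proof -
  define A where "A s = T s / \<alpha> + W s" for s
  define B where "B s = T s / \<alpha> - W s" for s
  have mA: "mono_on I A" and mB: "mono_on I B"
    unfolding A_def[abs_def] B_def[abs_def] using dominated_mono_on[OF I(2) assms(4) dT dW dom] by auto
  obtain s1 where s1: "s1 \<in> I" using I(3) by auto
  obtain M where "\<And>s. s \<in> I \<Longrightarrow> T s \<le> M"
    using \<open>bdd_above (T ` I)\<close> by (auto simp: bdd_above_def)
  then have AB: "A s + B s \<le> 2 * M / \<alpha>" if "s \<in> I" for s
    using that \<open>\<alpha> > 0\<close> unfolding A_def B_def by (auto simp: field_simps)
  obtain LA where "(A \<longlongrightarrow> LA) (upper_end I)"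
    using mono_on_tendsto_upper_end[OF I(1,2) s1 mA, of "2 * M / \<alpha> - B s1"]
      AB mono_onD[OF mB s1] by fastforce
  moreover obtain LB where "(B \<longlongrightarrow> LB) (upper_end I)"
    using mono_on_tendsto_upper_end[OF I(1,2) s1 mB, of "2 * M / \<alpha> - A s1"]
      AB mono_onD[OF mA s1] by fastforce
  ultimately have "((\<lambda>s. (A s - B s) / 2) \<longlongrightarrow> (LA - LB) / 2) (upper_end I)"
    by (intro tendsto_intros) simp_all
  moreover have "(\<lambda>s. (A s - B s) / 2) = W"
    unfolding A_def B_def by auto
  ultimately show ?thesis by auto
qed

lemma dominated_tendsto_lower_end:
  fixes T W T' W' :: "real \<Rightarrow> real"
  assumes I: "open I" "is_interval I" "I \<noteq> {}" and "\<alpha> > 0"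
    and dT: "\<And>s. s \<in> I \<Longrightarrow> (T has_real_derivative T' s) (at s)"
    and dW: "\<And>s. s \<in> I \<Longrightarrow> (W has_real_derivative W' s) (at s)"
    and dom: "\<And>s. s \<in> I \<Longrightarrow> \<alpha> * \<bar>W' s\<bar> \<le> T' s"
    and "bdd_below (T ` I)"
  shows "\<exists>L. (W \<longlongrightarrow> L) (lower_end I)"
proof -
  define A where "A s = T s / \<alpha> + W s" for s
  define B where "B s = T s / \<alpha> - W s" for s
  have mA: "mono_on I A" and mB: "mono_on I B"
    unfolding A_def[abs_def] B_def[abs_def] using dominated_mono_on[OF I(2) assms(4) dT dW dom] by auto
  obtain s1 where s1: "s1 \<in> I" using I(3) by auto
  obtain M where "\<And>s. s \<in> I \<Longrightarrow> M \<le> T s"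
    using \<open>bdd_below (T ` I)\<close> by (auto simp: bdd_below_def)
  then have AB: "2 * M / \<alpha> \<le> A s + B s" if "s \<in> I" for s
    using that \<open>\<alpha> > 0\<close> unfolding A_def B_def by (auto simp: field_simps)
  obtain LA where "(A \<longlongrightarrow> LA) (lower_end I)"
    using mono_on_tendsto_lower_end[OF I(1,2) s1 mA, of "2 * M / \<alpha> - B s1"]
      AB mono_onD[OF mB _ s1] by fastforce
  moreover obtain LB where "(B \<longlongrightarrow> LB) (lower_end I)"
    using mono_on_tendsto_lower_end[OF I(1,2) s1 mB, of "2 * M / \<alpha> - A s1"]
      AB mono_onD[OF mA _ s1] by fastforce
  ultimately have "((\<lambda>s. (A s - B s) / 2) \<longlongrightarrow> (LA - LB) / 2) (lower_end I)"
    by (intro tendsto_intros) simp_all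
  moreover have "(\<lambda>s. (A s - B s) / 2) = W"
    unfolding A_def B_def by auto
  ultimately show ?thesis by auto
qed

lemma dominated_tendsto_common_end:
  fixes T T' :: "real \<Rightarrow> real"
  assumes I: "open I" "is_interval I" "I \<noteq> {}" and "\<alpha> > 0"
    and dT: "\<And>s. s \<in> I \<Longrightarrow> (T has_real_derivative T' s) (at s)"
    and "bdd_above (T ` I) \<or> bdd_below (T ` I)"
  shows "\<exists>F. (F = upper_end I \<or> F = lower_end I) \<and>
    (\<forall>W W'. (\<forall>s\<in>I. (W has_real_derivative W' s) (at s) \<and> \<alpha> * \<bar>W' s\<bar> \<le> T' s) \<longrightarrow>
      (\<exists>L. (W \<longlongrightarrow> L) F))"
proof (cases "bdd_above (T ` I)")
  case True
  have "\<exists>L. (W \<longlongrightarrow> L) (upper_end I)"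
    if "\<forall>s\<in>I. (W has_real_derivative W' s) (at s) \<and> \<alpha> * \<bar>W' s\<bar> \<le> T' s" for W W'
    using that by (intro dominated_tendsto_upper_end[where W' = W', OF I \<open>\<alpha> > 0\<close> dT _ _ True]) auto
  then show ?thesis
    by blast
next
  case False
  then have "bdd_below (T ` I)"
    using assms(6) by simp
  have "\<exists>L. (W \<longlongrightarrow> L) (lower_end I)"
    if "\<forall>s\<in>I. (W has_real_derivative W' s) (at s) \<and> \<alpha> * \<bar>W' s\<bar> \<le> T' s" for W W'
    using that by (intro dominated_tendsto_lower_end[where W' = W', OF I \<open>\<alpha> > 0\<close> dT _ _ \<open>bdd_below (T ` I)\<close>]) auto
  then show ?thesis
    by blast
qed

lemma inextendible_scale_fst:
  fixes T :: "real \<Rightarrow> real" and R :: "real \<Rightarrow> 'a::topological_space"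
  assumes "inextendible I (\<lambda>s. (T s, R s))" "c \<noteq> 0"
  shows "inextendible I (\<lambda>s. (c * T s, R s))"
proof -
  have "\<exists>L. ((\<lambda>s. (T s, R s)) \<longlongrightarrow> L) F" if "((\<lambda>s. (c * T s, R s)) \<longlongrightarrow> L) F" for L F
  proof -
    have "((\<lambda>s. c * T s) \<longlongrightarrow> fst L) F"
      using tendsto_fst[OF that] by simp
    then have "(T \<longlongrightarrow> fst L / c) F"
      using tendsto_mult_left_iff[OF \<open>c \<noteq> 0\<close>, of T "fst L / c" F] \<open>c \<noteq> 0\<close> by simp
    moreover have "(R \<longlongrightarrow> snd L) F"
      using tendsto_snd[OF that] by simp
    ultimately show ?thesis
      by (blast intro: tendsto_Pair)
  qed
  then show ?thesis
    using assms(1) unfolding inextendible_def by blast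
qed

lemma inextendible_dominated_curve_unbounded:
  fixes T X Y Z T' X' Y' Z' :: "real \<Rightarrow> real"
  assumes I: "open I" "is_interval I" "I \<noteq> {}" and \<alpha>: "0 < \<alpha>" "\<alpha> \<le> 1"
    and dT: "\<And>s. s \<in> I \<Longrightarrow> (T has_real_derivative T' s) (at s)"
    and dX: "\<And>s. s \<in> I \<Longrightarrow> (X has_real_derivative X' s) (at s)"
    and dY: "\<And>s. s \<in> I \<Longrightarrow> (Y has_real_derivative Y' s) (at s)"
    and dZ: "\<And>s. s \<in> I \<Longrightarrow> (Z has_real_derivative Z' s) (at s)"
    and dom: "\<And>s. s \<in> I \<Longrightarrow> \<alpha> * \<bar>X' s\<bar> \<le> T' s \<and> \<alpha> * \<bar>Y' s\<bar> \<le> T' s \<and> \<alpha> * \<bar>Z' s\<bar> \<le> T' s"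
    and inext: "inextendible I (\<lambda>s. (T s, X s, Y s, Z s))"
  shows "\<not> bdd_above (T ` I) \<and> \<not> bdd_below (T ` I)"
proof (rule ccontr)
  assume "\<not> ?thesis"
  then have bdd: "bdd_above (T ` I) \<or> bdd_below (T ` I)"
    by simp
  have "\<exists>F. (F = upper_end I \<or> F = lower_end I) \<and>
    (\<forall>W W'. (\<forall>s\<in>I. (W has_real_derivative W' s) (at s) \<and> \<alpha> * \<bar>W' s\<bar> \<le> T' s) \<longrightarrow>
      (\<exists>L. (W \<longlongrightarrow> L) F))"
    by (rule dominated_tendsto_common_end[OF I \<alpha>(1) _ bdd]) (rule dT)
  then obtain F where F: "F = upper_end I \<or> F = lower_end I"
    and lim: "\<forall>W W'. (\<forall>s\<in>I. (W has_real_derivative W' s) (at s) \<and> \<alpha> * \<bar>W' s\<bar> \<le> T' s) \<longrightarrow>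
      (\<exists>L. (W \<longlongrightarrow> L) F)"
    by (elim exE conjE)
  have "\<alpha> * \<bar>T' s\<bar> \<le> T' s" if "s \<in> I" for s
  proof -
    have "0 \<le> \<alpha> * \<bar>X' s\<bar>"
      using \<alpha>(1) by simp
    then have "0 \<le> T' s"
      using dom[OF that] by linarith
    with \<alpha> show ?thesis
      by (simp add: mult_left_le_one_le)
  qed
  have "\<exists>L. (T \<longlongrightarrow> L) F" "\<exists>L. (X \<longlongrightarrow> L) F" "\<exists>L. (Y \<longlongrightarrow> L) F" "\<exists>L. (Z \<longlongrightarrow> L) F"
    using dT dX dY dZ dom \<open>\<And>s. s \<in> I \<Longrightarrow> \<alpha> * \<bar>T' s\<bar> \<le> T' s\<close>
    by (intro lim[rule_format, of T T'] lim[rule_format, of X X'] lim[rule_format, of Y Y']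
        lim[rule_format, of Z Z'] ballI conjI; simp)+
  then obtain LT LX LY LZ where "(T \<longlongrightarrow> LT) F" "(X \<longlongrightarrow> LX) F" "(Y \<longlongrightarrow> LY) F" "(Z \<longlongrightarrow> LZ) F"
    by blast
  then have "((\<lambda>s. (T s, X s, Y s, Z s)) \<longlongrightarrow> (LT, LX, LY, LZ)) F"
    by (intro tendsto_intros)
  with F inext show False
    unfolding inextendible_def by blast
qed

lemma inextendible_dominated_curve_surj:
  fixes T X Y Z T' X' Y' Z' :: "real \<Rightarrow> real"
  assumes I: "open I" "is_interval I" "I \<noteq> {}" and \<alpha>: "0 < \<alpha>" "\<alpha> \<le> 1"
    and dT: "\<And>s. s \<in> I \<Longrightarrow> (T has_real_derivative T' s) (at s)"
    and dX: "\<And>s. s \<in> I \<Longrightarrow> (X has_real_derivative X' s) (at s)"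
    and dY: "\<And>s. s \<in> I \<Longrightarrow> (Y has_real_derivative Y' s) (at s)"
    and dZ: "\<And>s. s \<in> I \<Longrightarrow> (Z has_real_derivative Z' s) (at s)"
    and dom: "\<And>s. s \<in> I \<Longrightarrow> \<alpha> * \<bar>X' s\<bar> \<le> T' s \<and> \<alpha> * \<bar>Y' s\<bar> \<le> T' s \<and> \<alpha> * \<bar>Z' s\<bar> \<le> T' s"
    and inext: "inextendible I (\<lambda>s. (T s, X s, Y s, Z s))"
  shows "t \<in> T ` I"
proof (rule ccontr)
  assume "t \<notin> T ` I"
  moreover have "continuous_on I T"
    by (rule continuous_at_imp_continuous_on) (use dT DERIV_isCont in blast)
  then have "is_interval (T ` I)"
    unfolding is_interval_connected_1
    by (rule connected_continuous_image[OF _ is_interval_connected[OF I(2)]])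
  ultimately have "(\<forall>x\<in>T ` I. x < t) \<or> (\<forall>x\<in>T ` I. t < x)"
    by (intro is_interval_avoiding_point)
  then have "bdd_above (T ` I) \<or> bdd_below (T ` I)"
  proof
    assume "\<forall>x\<in>T ` I. x < t"
    then have "bdd_above (T ` I)"
      by (intro bdd_aboveI[of _ t]) auto
    then show ?thesis ..
  next
    assume "\<forall>x\<in>T ` I. t < x"
    then have "bdd_below (T ` I)"
      by (intro bdd_belowI[of _ t]) auto
    then show ?thesis ..
  qed
  with inextendible_dominated_curve_unbounded[OF I \<alpha> dT dX dY dZ dom inext] show False
    by simp
qed

lemma crosses_level_once_if_dominated:
  fixes T X Y Z T' X' Y' Z' :: "real \<Rightarrow> real"
  assumes I: "open I" "is_interval I" "I \<noteq> {}" and \<alpha>: "0 < \<alpha>" "\<alpha> \<le> 1"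
    and dT: "\<And>s. s \<in> I \<Longrightarrow> (T has_real_derivative T' s) (at s)"
    and dX: "\<And>s. s \<in> I \<Longrightarrow> (X has_real_derivative X' s) (at s)"
    and dY: "\<And>s. s \<in> I \<Longrightarrow> (Y has_real_derivative Y' s) (at s)"
    and dZ: "\<And>s. s \<in> I \<Longrightarrow> (Z has_real_derivative Z' s) (at s)"
    and "continuous_on I T'" "\<And>s. s \<in> I \<Longrightarrow> T' s \<noteq> 0"
    and dom: "\<And>s. s \<in> I \<Longrightarrow> \<alpha> * \<bar>X' s\<bar> \<le> \<bar>T' s\<bar> \<and> \<alpha> * \<bar>Y' s\<bar> \<le> \<bar>T' s\<bar> \<and> \<alpha> * \<bar>Z' s\<bar> \<le> \<bar>T' s\<bar>"
    and inext: "inextendible I (\<lambda>s. (T s, X s, Y s, Z s))"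
  shows "\<exists>!s. s \<in> I \<and> T s = t0"
proof -
  text \<open>Reverse time if necessary, so that the time function becomes increasing.\<close>
  obtain \<sigma> where \<sigma>: "\<bar>\<sigma>\<bar> = 1" "\<And>s. s \<in> I \<Longrightarrow> 0 < \<sigma> * T' s"
    using continuous_nonvanishing_sign[OF I(2) assms(10,11)] by blast
  have \<sigma>\<sigma>: "\<sigma> * \<sigma> = 1"
    using abs_mult_self_eq[of \<sigma>] \<sigma>(1) by simp
  define S where "S s = \<sigma> * T s" for s
  have T_eq: "T s = \<sigma> * S s" for s
    unfolding S_def using \<sigma>\<sigma> by (simp add: mult.assoc[symmetric])
  have dS: "(S has_real_derivative \<sigma> * T' s) (at s)" if "s \<in> I" for s
    unfolding S_def[abs_def] using dT[OF that] by (rule DERIV_cmult)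
  have dom_\<sigma>: "\<alpha> * \<bar>X' s\<bar> \<le> \<sigma> * T' s \<and> \<alpha> * \<bar>Y' s\<bar> \<le> \<sigma> * T' s \<and> \<alpha> * \<bar>Z' s\<bar> \<le> \<sigma> * T' s"
    if "s \<in> I" for s
  proof -
    have "\<bar>\<sigma> * T' s\<bar> = \<sigma> * T' s"
      using \<sigma>(2)[OF that] by simp
    then show ?thesis
      using dom[OF that] \<sigma>(1) by (simp add: abs_mult)
  qed
  have "inj_on S I"
    using strict_mono_on_if_DERIV_pos[where f' = "\<lambda>s. \<sigma> * T' s", OF I(2) dS \<sigma>(2)]
    by (rule strict_mono_on_imp_inj_on)
  then have inj: "inj_on T I"
    unfolding inj_on_def S_def by simp
  have inext_S: "inextendible I (\<lambda>s. (S s, X s, Y s, Z s))"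
    unfolding S_def using inextendible_scale_fst[OF inext] \<sigma>(1) by fastforce
  have "\<sigma> * t0 \<in> S ` I"
    by (rule inextendible_dominated_curve_surj[where T' = "\<lambda>s. \<sigma> * T' s",
        OF I \<alpha> _ dX dY dZ _ inext_S]) (simp_all add: dS dom_\<sigma>)
  then obtain s where "s \<in> I" "S s = \<sigma> * t0"
    by auto
  then have "s \<in> I \<and> T s = t0"
    using T_eq[of s] \<sigma>\<sigma> by (auto simp: mult.assoc[symmetric])
  with inj show ?thesis
    by (auto dest: inj_onD)
qed

section \<open>Timelike curves of the Lorentz metric\<close>

lemma causal_bound:
  fixes X Y Z T' X' Y' Z' :: "real \<Rightarrow> real"
  assumes "\<alpha>\<^sup>2 \<le> 1" and I: "open I" "s \<in> I"
    and dX: "\<And>u. u \<in> I \<Longrightarrow> (X has_real_derivative X' u) (at u)"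
    and dY: "\<And>u. u \<in> I \<Longrightarrow> (Y has_real_derivative Y' u) (at u)"
    and cont: "continuous_on I T'" "continuous_on I X'" "continuous_on I Y'" "continuous_on I Z'"
    and timelike: "AE u in lborel. u \<in> I \<longrightarrow> rho \<alpha> c1 c2 (X u, Y u, Z u) (X' u, Y' u, Z' u) - (T' u)\<^sup>2 < 0"
  shows "\<alpha>\<^sup>2 * ((X' s)\<^sup>2 + (Y' s)\<^sup>2) + (Z' s)\<^sup>2 \<le> (T' s)\<^sup>2"
proof -
  have cont_at: "isCont T' s" "isCont X' s" "isCont Y' s" "isCont Z' s"
    using cont I by (simp_all add: continuous_on_eq_continuous_at)
  note minorant_nonpos = AE_neg_imp_continuous_minorant_nonpos[OF timelike I]
  show ?thesis
  proof (cases "X' s = 0 \<and> Y' s = 0")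
    case True
    obtain K where K: "\<And>p v1 v2 v3. v3\<^sup>2 - K * (v1\<^sup>2 + v2\<^sup>2) \<le> rho \<alpha> c1 c2 p (v1, v2, v3)"
      using rho_lower_bound[OF \<open>\<alpha>\<^sup>2 \<le> 1\<close>] by blast
    have "(\<lambda>u. (Z' u)\<^sup>2 - K * ((X' u)\<^sup>2 + (Y' u)\<^sup>2) - (T' u)\<^sup>2) s \<le> 0"
      using K by (intro minorant_nonpos always_eventually continuous_intros cont_at) (smt (verit))
    then show ?thesis
      using True by simp
  next
    case False
    then have "eventually (\<lambda>u. (X u, Y u) \<noteq> (0, 0)) (at s)"
      using DERIV_nonzero_imp_eventually_nonzero[OF dX[OF I(2)]]
        DERIV_nonzero_imp_eventually_nonzero[OF dY[OF I(2)]]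
      by (auto elim: eventually_mono)
    then have "eventually (\<lambda>u. \<alpha>\<^sup>2 * ((X' u)\<^sup>2 + (Y' u)\<^sup>2) + (Z' u)\<^sup>2 - (T' u)\<^sup>2
        \<le> rho \<alpha> c1 c2 (X u, Y u, Z u) (X' u, Y' u, Z' u) - (T' u)\<^sup>2) (at s)"
      by (rule eventually_mono) (use rho_ge_off_axis[OF _ \<open>\<alpha>\<^sup>2 \<le> 1\<close>] in simp)
    then have "(\<lambda>u. \<alpha>\<^sup>2 * ((X' u)\<^sup>2 + (Y' u)\<^sup>2) + (Z' u)\<^sup>2 - (T' u)\<^sup>2) s \<le> 0"
      by (intro minorant_nonpos continuous_intros cont_at)
    then show ?thesis
      by simp
  qed
qed

lemma causal_abs_le:
  fixes t x y z :: real
  assumes "0 < \<alpha>" "\<alpha>\<^sup>2 \<le> 1" and causal: "\<alpha>\<^sup>2 * (x\<^sup>2 + y\<^sup>2) + z\<^sup>2 \<le> t\<^sup>2"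
  shows "\<alpha> * \<bar>x\<bar> \<le> \<bar>t\<bar>" "\<alpha> * \<bar>y\<bar> \<le> \<bar>t\<bar>" "\<alpha> * \<bar>z\<bar> \<le> \<bar>t\<bar>"
proof -
  have "\<alpha>\<^sup>2 * z\<^sup>2 \<le> z\<^sup>2"
    using \<open>\<alpha>\<^sup>2 \<le> 1\<close> by (intro mult_left_le_one_le) simp_all
  moreover have "0 \<le> \<alpha>\<^sup>2 * x\<^sup>2" "0 \<le> \<alpha>\<^sup>2 * y\<^sup>2" "0 \<le> \<alpha>\<^sup>2 * z\<^sup>2"
    by simp_all
  ultimately have "(\<alpha> * x)\<^sup>2 \<le> t\<^sup>2" "(\<alpha> * y)\<^sup>2 \<le> t\<^sup>2" "(\<alpha> * z)\<^sup>2 \<le> t\<^sup>2"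
    using causal unfolding power_mult_distrib distrib_left by linarith+
  then show "\<alpha> * \<bar>x\<bar> \<le> \<bar>t\<bar>" "\<alpha> * \<bar>y\<bar> \<le> \<bar>t\<bar>" "\<alpha> * \<bar>z\<bar> \<le> \<bar>t\<bar>"
    using \<open>0 < \<alpha>\<close> by (simp_all add: abs_le_square_iff[symmetric] abs_mult)
qed

lemma causal_zero_time:
  fixes x y z :: real
  assumes "0 < \<alpha>" and causal: "\<alpha>\<^sup>2 * (x\<^sup>2 + y\<^sup>2) + z\<^sup>2 \<le> 0\<^sup>2"
  shows "x = 0" "y = 0" "z = 0"
proof -
  have "\<alpha>\<^sup>2 * (x\<^sup>2 + y\<^sup>2) + z\<^sup>2 \<le> 0"
    using causal by simp
  moreover have "0 \<le> \<alpha>\<^sup>2 * (x\<^sup>2 + y\<^sup>2)" "0 \<le> z\<^sup>2"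
    by simp_all
  ultimately have "\<alpha>\<^sup>2 * (x\<^sup>2 + y\<^sup>2) = 0" "z\<^sup>2 = 0"
    by linarith+
  then show "x = 0" "y = 0" "z = 0"
    using \<open>0 < \<alpha>\<close> by simp_all
qed

lemma has_vector_derivative_fst:
  "(f has_vector_derivative f') F \<Longrightarrow> ((\<lambda>x. fst (f x)) has_vector_derivative fst f') F"
  unfolding has_vector_derivative_def by (drule has_derivative_fst) simp

lemma has_vector_derivative_snd:
  "(f has_vector_derivative f') F \<Longrightarrow> ((\<lambda>x. snd (f x)) has_vector_derivative snd f') F"
  unfolding has_vector_derivative_def by (drule has_derivative_snd) simp

lemma timelike_curve_crosses_level_once:
  fixes \<gamma> \<gamma>' :: "real \<Rightarrow> real \<times> real \<times> real \<times> real"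
  assumes \<alpha>: "0 < \<alpha>" "\<alpha> < 1" and I: "open I" "is_interval I" "I \<noteq> {}"
    and d\<gamma>: "\<And>s. s \<in> I \<Longrightarrow> (\<gamma> has_vector_derivative \<gamma>' s) (at s)"
    and "continuous_on I \<gamma>'" "inextendible I \<gamma>" and nonzero: "\<And>s. s \<in> I \<Longrightarrow> \<gamma>' s \<noteq> 0"
    and timelike: "AE s in lborel. s \<in> I \<longrightarrow> g_alpha \<alpha> c1 c2 (\<gamma> s) (\<gamma>' s) < 0"
  shows "\<exists>!s. s \<in> I \<and> fst (\<gamma> s) = t0"
proof -
  define T X Y Z where position: "T s = fst (\<gamma> s)" "X s = fst (snd (\<gamma> s))"
    "Y s = fst (snd (snd (\<gamma> s)))" "Z s = snd (snd (snd (\<gamma> s)))" for s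
  define T' X' Y' Z' where velocity: "T' s = fst (\<gamma>' s)" "X' s = fst (snd (\<gamma>' s))"
    "Y' s = fst (snd (snd (\<gamma>' s)))" "Z' s = snd (snd (snd (\<gamma>' s)))" for s
  note defs = position velocity
  have \<gamma>_eq: "\<gamma> = (\<lambda>s. (T s, X s, Y s, Z s))" and \<gamma>'_eq: "\<gamma>' s = (T' s, X' s, Y' s, Z' s)" for s
    by (simp_all add: defs)
  have "(T has_real_derivative T' s) (at s)" "(X has_real_derivative X' s) (at s)"
    "(Y has_real_derivative Y' s) (at s)" "(Z has_real_derivative Z' s) (at s)" if "s \<in> I" for s
    unfolding has_real_derivative_iff_has_vector_derivative defs[abs_def]
    by (intro has_vector_derivative_fst has_vector_derivative_snd d\<gamma> that)+
  note d = this
  have cont: "continuous_on I T'" "continuous_on I X'" "continuous_on I Y'" "continuous_on I Z'"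
    unfolding defs[abs_def] using \<open>continuous_on I \<gamma>'\<close> by (auto intro!: continuous_intros)
  have "\<alpha>\<^sup>2 \<le> 1"
    using \<alpha> by (simp add: power_le_one)
  have "AE u in lborel. u \<in> I \<longrightarrow> rho \<alpha> c1 c2 (X u, Y u, Z u) (X' u, Y' u, Z' u) - (T' u)\<^sup>2 < 0"
    using timelike by (simp add: g_alpha_def \<gamma>_eq \<gamma>'_eq)
  note timelike_rho = this
  have causal: "\<alpha>\<^sup>2 * ((X' s)\<^sup>2 + (Y' s)\<^sup>2) + (Z' s)\<^sup>2 \<le> (T' s)\<^sup>2" if "s \<in> I" for s
    by (rule causal_bound[OF \<open>\<alpha>\<^sup>2 \<le> 1\<close> I(1) that _ _ cont timelike_rho]) (rule d; assumption)+
  have dom: "\<alpha> * \<bar>X' s\<bar> \<le> \<bar>T' s\<bar> \<and> \<alpha> * \<bar>Y' s\<bar> \<le> \<bar>T' s\<bar> \<and> \<alpha> * \<bar>Z' s\<bar> \<le> \<bar>T' s\<bar>"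
    if "s \<in> I" for s
    using causal_abs_le[OF \<alpha>(1) \<open>\<alpha>\<^sup>2 \<le> 1\<close> causal[OF that]] by simp
  have T'_nonzero: "T' s \<noteq> 0" if "s \<in> I" for s
  proof
    assume "T' s = 0"
    then have "\<gamma>' s = 0"
      using causal_zero_time[OF \<alpha>(1) causal[OF that, unfolded \<open>T' s = 0\<close>]] by (simp add: \<gamma>'_eq zero_prod_def)
    with nonzero[OF that] show False ..
  qed
  have "\<exists>!s. s \<in> I \<and> T s = t0"
  proof (rule crosses_level_once_if_dominated[OF I \<alpha>(1)])
    show "\<alpha> \<le> 1"
      using \<alpha>(2) by simp
    show "inextendible I (\<lambda>s. (T s, X s, Y s, Z s))"
      using \<open>inextendible I \<gamma>\<close> unfolding \<gamma>_eq .
  qed (use d cont dom T'_nonzero in blast)+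
  then show ?thesis
    by (simp add: position)
qed

theorem mainTheorem2:
  fixes \<alpha> c1 c2 :: real
  assumes "0 < \<alpha>" and "\<alpha> < 1"
  shows "(\<forall>x y z v1 v2 v3. (x, y) \<noteq> (0, 0) \<longrightarrow>
            rho \<alpha> c1 c2 (x, y, z) (v1, v2, v3) \<ge> \<alpha>\<^sup>2 * (v1\<^sup>2 + v2\<^sup>2) + v3\<^sup>2)
       \<and> (\<forall>(t0::real) (I::real set) (\<gamma>::real \<Rightarrow> real \<times> (real \<times> real \<times> real)) \<gamma>'.
            open I \<and> is_interval I \<and> I \<noteq> {}
            \<and> (\<forall>s\<in>I. (\<gamma> has_vector_derivative \<gamma>' s) (at s))
            \<and> continuous_on I \<gamma>'
            \<and> inextendible I \<gamma>
            \<and> (\<forall>s\<in>I. \<gamma>' s \<noteq> 0)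
            \<and> (AE s in lborel. s \<in> I \<longrightarrow> g_alpha \<alpha> c1 c2 (\<gamma> s) (\<gamma>' s) < 0)
            \<longrightarrow> (\<exists>!s. s \<in> I \<and> fst (\<gamma> s) = t0))"
proof (intro conjI allI impI)
  fix x y z v1 v2 v3 :: real
  assume "(x, y) \<noteq> (0, 0)"
  moreover have "\<alpha>\<^sup>2 \<le> 1"
    using assms by (simp add: power_le_one)
  ultimately show "rho \<alpha> c1 c2 (x, y, z) (v1, v2, v3) \<ge> \<alpha>\<^sup>2 * (v1\<^sup>2 + v2\<^sup>2) + v3\<^sup>2"
    by (rule rho_ge_off_axis)
next
  fix t0 :: real and I :: "real set" and \<gamma> :: "real \<Rightarrow> real \<times> real \<times> real \<times> real" and \<gamma>'
  assume "open I \<and> is_interval I \<and> I \<noteq> {}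
    \<and> (\<forall>s\<in>I. (\<gamma> has_vector_derivative \<gamma>' s) (at s)) \<and> continuous_on I \<gamma>' \<and> inextendible I \<gamma>
    \<and> (\<forall>s\<in>I. \<gamma>' s \<noteq> 0) \<and> (AE s in lborel. s \<in> I \<longrightarrow> g_alpha \<alpha> c1 c2 (\<gamma> s) (\<gamma>' s) < 0)"
  then show "\<exists>!s. s \<in> I \<and> fst (\<gamma> s) = t0"
    using timelike_curve_crosses_level_once[OF assms] by blast
qed

end
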